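(* Let $0<c<1$. For $\lambda\in(0,1)$ and $u\ge1$ put $I_u(\lambda)=\int_u^\infty\frac{dx}{\sqrt{x(x-1)(x-\lambda)}}$ (positive square root). Then $\lambda\mapsto I_{1/c^2}(\lambda)/I_1(\lambda)$ is strictly decreasing on $(0,1)$, tends to $0$ as $\lambda\to1^-$, and tends to $1-\frac{2}{\pi}\arctan\sqrt{c^{-2}-1}$ as $\lambda\to0^+$. For $\lambda\in(1,1/c^2)$, with $I_{1/c^2}(\lambda)$ defined by the same formula and $\omega_2(\lambda)=\int_0^1\frac{dx}{\sqrt{x(x-1)(x-\lambda)}}$ (positive square root), the function $\lambda\mapsto I_{1/c^2}(\lambda)/\omega_2(\lambda)$ is strictly increasing on $(1,1/c^2)$, tends to $0$ as $\lambda\to1^+$ and to $1$ as $\lambda\to (1/c^2)^-$. *)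

theory Defs
  imports "HOL-Analysis.Analysis"
begin

definition ell_integrand :: "real \<Rightarrow> real \<Rightarrow> real" where
  "ell_integrand l x = 1 / sqrt (x * (x - 1) * (x - l))"

definition I_int :: "real \<Rightarrow> real \<Rightarrow> real" where
  "I_int u l = integral {u..} (ell_integrand l)"

definition omega2 :: "real \<Rightarrow> real" where
  "omega2 l = integral {0..1} (ell_integrand l)"

end

theory Submission
  imports Defs "HOL-Real_Asymp.Real_Asymp"
begin

(* In Legendre form F(a, m) = int_0^a ds / sqrt (s (1 - s) (1 - m s)), the substitutions x = 1/s
   (for l < 1) and x = l/s (for l > 1) give I_u(l) = F(1/u, l) and I_u(l) = F(l/u, 1/l) / sqrt l,
   while omega_2(l) = F(1, 1/l) / sqrt l; so both ratios are of the form F(a, m) / F(1, m).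
   For m1 < m2 the kernels differ by the factor sqrt ((1 - m1 s) / (1 - m2 s)), which increases
   in s, so raising m moves relative mass from [0, a] to [a, 1]: the ratio decreases in m, and it
   obviously increases in a, which gives both monotonicity statements.  As m -> 1 the complete
   integral F(1, m) >= -ln (1 - m) diverges while F(a, m) with a < 1 stays bounded; at m = 0,
   F(a, 0) = 2 arcsin (sqrt a); and as a -> 1 the tail int_a^1 is O(sqrt (1 - a)) uniformly for
   m bounded away from 1. *)

lemma integral_le_open_interval:
  fixes f g :: "real \<Rightarrow> real"
  assumes "f integrable_on {a..b}" "g integrable_on {a..b}" "\<And>x. x \<in> {a<..<b} \<Longrightarrow> f x \<le> g x"
  shows "integral {a..b} f \<le> integral {a..b} g"
  unfolding integral_open_interval_real
  by (rule integral_le) (use assms integrable_on_Icc_iff_Ioo in auto)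

lemma integral_ge_const_open_interval:
  fixes f :: "real \<Rightarrow> real"
  assumes "a \<le> b" "f integrable_on {a..b}" "\<And>x. x \<in> {a<..<b} \<Longrightarrow> k \<le> f x"
  shows "(b - a) * k \<le> integral {a..b} f"
  using integral_le_open_interval[of "\<lambda>_. k" a b f] assms by (simp add: integrable_const_ivl)

lemma integral_less_mult_of_strict_mono_factor:
  fixes f g h :: "real \<Rightarrow> real"
  assumes "p < a" "0 < \<epsilon>"
    and "f integrable_on {p..a}" "g integrable_on {p..a}"
    and f_ge: "\<And>s. s \<in> {p<..<a} \<Longrightarrow> \<epsilon> \<le> f s"
    and g_eq: "\<And>s. s \<in> {p<..<a} \<Longrightarrow> g s = h s * f s"
    and h_mono: "strict_mono_on {p<..a} h"
  shows "integral {p..a} g < h a * integral {p..a} f"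
proof -
  define c where "c = (p + a) / 2"
  have c: "p < c" "c < a" using assms(1) by (auto simp: c_def)
  define d where "d s = h a * f s - g s" for s
  have d_int: "d integrable_on {x..y}" if "p \<le> x" "x \<le> y" "y \<le> a" for x y
  proof -
    have "f integrable_on {x..y}" "g integrable_on {x..y}"
      using assms(3,4) that by (auto intro: integrable_subinterval_real)
    then show ?thesis unfolding d_def by (intro integrable_diff integrable_on_mult_right)
  qed
  have h_less: "h s < h t" if "p < s" "s < t" "t \<le> a" for s t
    using h_mono that by (auto simp: monotone_on_def)
  have "(c - p) * ((h a - h c) * \<epsilon>) \<le> integral {p..c} d"
  proof (rule integral_ge_const_open_interval)
    fix s assume s: "s \<in> {p<..<c}"
    have "(h a - h c) * \<epsilon> \<le> (h a - h s) * f s"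
      using s c h_less[of s c] h_less[of c a] f_ge[of s] assms(2) by (intro mult_mono) auto
    then show "(h a - h c) * \<epsilon> \<le> d s" using g_eq[of s] s c by (simp add: d_def algebra_simps)
  qed (use d_int c in auto)
  moreover have "0 < (c - p) * ((h a - h c) * \<epsilon>)"
    using c h_less[of c a] assms(2) by simp
  moreover have "(a - c) * 0 \<le> integral {c..a} d"
  proof (rule integral_ge_const_open_interval)
    fix s assume s: "s \<in> {c<..<a}"
    then have "0 \<le> (h a - h s) * f s"
      using c h_less[of s a] f_ge[of s] assms(2) by (intro mult_nonneg_nonneg) auto
    then show "0 \<le> d s" using g_eq[of s] s c by (simp add: d_def algebra_simps)
  qed (use d_int c in auto)
  moreover have "integral {p..a} d = integral {p..c} d + integral {c..a} d"
    using Henstock_Kurzweil_Integration.integral_combine[of p c a d] c d_int[of p a] by simp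
  moreover have "integral {p..a} d = h a * integral {p..a} f - integral {p..a} g"
    unfolding d_def by (simp add: integral_diff[OF integrable_on_mult_right[OF assms(3)] assms(4)])
  ultimately show ?thesis by linarith
qed

lemma integral_le_mult_of_mono_factor:
  fixes f g h :: "real \<Rightarrow> real"
  assumes "f integrable_on {a..q}" "g integrable_on {a..q}"
    and f_nonneg: "\<And>s. s \<in> {a<..<q} \<Longrightarrow> 0 \<le> f s"
    and g_eq: "\<And>s. s \<in> {a<..<q} \<Longrightarrow> g s = h s * f s"
    and h_ge: "\<And>s. s \<in> {a<..<q} \<Longrightarrow> h a \<le> h s"
  shows "h a * integral {a..q} f \<le> integral {a..q} g"
proof -
  have "integral {a..q} (\<lambda>s. h a * f s) \<le> integral {a..q} g"
    by (rule integral_le_open_interval)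
       (use assms in \<open>auto intro: integrable_on_mult_right mult_right_mono\<close>)
  then show ?thesis by simp
qed

lemma integral_fraction_less_of_strict_mono_factor:
  fixes f g h :: "real \<Rightarrow> real"
  assumes "p < a" "a < q" "0 < \<epsilon>"
    and f_int: "f integrable_on {p..q}" and g_int: "g integrable_on {p..q}"
    and f_ge: "\<And>s. s \<in> {p<..<q} \<Longrightarrow> \<epsilon> \<le> f s"
    and g_eq: "\<And>s. s \<in> {p<..<q} \<Longrightarrow> g s = h s * f s"
    and h_pos: "\<And>s. s \<in> {p<..<q} \<Longrightarrow> 0 < h s"
    and h_mono: "strict_mono_on {p<..<q} h"
  shows "integral {p..a} g / integral {p..q} g < integral {p..a} f / integral {p..q} f"
proof -
  have int: "f integrable_on {x..y}" "g integrable_on {x..y}" if "p \<le> x" "x \<le> y" "y \<le> q" for x y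
    using f_int g_int that by (auto intro: integrable_subinterval_real)
  define A1 A2 T1 T2 where "A1 = integral {p..a} f" and "A2 = integral {p..a} g"
    and "T1 = integral {a..q} f" and "T2 = integral {a..q} g"
  have split: "integral {p..q} f = A1 + T1" "integral {p..q} g = A2 + T2"
    unfolding A1_def A2_def T1_def T2_def using assms(1,2) f_int g_int
    by (simp_all add: Henstock_Kurzweil_Integration.integral_combine)
  have f_pos: "0 < f s" if "s \<in> {p<..<q}" for s
    using f_ge[OF that] assms(3) by simp
  have A: "A2 < h a * A1" unfolding A1_def A2_def
    by (rule integral_less_mult_of_strict_mono_factor[where \<epsilon> = \<epsilon>])
       (use assms int in \<open>auto intro: monotone_on_subset\<close>)
  have ha: "0 < h a" using h_pos assms(1,2) by simp
  have T: "h a * T1 \<le> T2" unfolding T1_def T2_def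
  proof (rule integral_le_mult_of_mono_factor)
    fix s assume "s \<in> {a<..<q}"
    then show "h a \<le> h s" using h_mono assms(1) by (auto simp: monotone_on_def intro: less_imp_le)
  qed (use assms int f_pos in \<open>auto intro: less_imp_le\<close>)
  have "(q - a) * \<epsilon> \<le> T1" unfolding T1_def
    by (rule integral_ge_const_open_interval) (use int assms(1,2) f_ge in auto)
  moreover have "0 < (q - a) * \<epsilon>" using assms(2,3) by simp
  ultimately have T1: "0 < T1" by linarith
  have "(a - p) * 0 \<le> A2" unfolding A2_def
  proof (rule integral_ge_const_open_interval)
    fix s assume "s \<in> {p<..<a}"
    then show "0 \<le> g s" using assms(2) f_pos[of s] g_eq[of s] h_pos[of s] by simp
  qed (use int assms(1,2) in auto)
  then have A2: "0 \<le> A2" by simp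
  then have A1: "0 < A1" using A ha zero_less_mult_pos[of "h a" A1] by linarith
  have "A2 * T1 < h a * A1 * T1" using A T1 by simp
  also have "\<dots> \<le> A1 * T2" using T A1 by (simp add: mult.commute mult.left_commute)
  finally have "A2 * (A1 + T1) < A1 * (A2 + T2)" by (simp add: algebra_simps)
  moreover have "0 < A1 + T1" "0 < A2 + T2" using A1 A2 T1 T ha by (simp, smt (verit) mult_pos_pos)
  ultimately show ?thesis
    unfolding split A1_def[symmetric] A2_def[symmetric] by (simp add: divide_simps mult.commute)
qed

lemma divide_image_Ioc:
  fixes b u :: real
  assumes "0 < b" "0 < u"
  shows "(\<lambda>s. b / s) ` {0<..b/u} = {u..}"
proof
  show "(\<lambda>s. b / s) ` {0<..b/u} \<subseteq> {u..}"
    using assms by (auto simp: field_simps)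
  show "{u..} \<subseteq> (\<lambda>s. b / s) ` {0<..b/u}"
  proof
    fix x assume x: "x \<in> {u..}"
    then have "b / x \<in> {0<..b/u}" using assms by (auto simp: field_simps intro: mult_left_mono)
    moreover have "x = b / (b / x)" using assms x by simp
    ultimately show "x \<in> (\<lambda>s. b / s) ` {0<..b/u}" by blast
  qed
qed

lemma integral_Ici_reciprocal_subst:
  fixes f :: "real \<Rightarrow> real"
  assumes b: "0 < b" and u: "0 < u"
    and ai_open: "(\<lambda>s. b / s\<^sup>2 * f (b / s)) absolutely_integrable_on {0<..<b/u}"
  shows "integral {u..} f = integral {0..b/u} (\<lambda>s. b / s\<^sup>2 * f (b / s))"
proof -
  let ?S = "{0<..b/u}"
  have "(\<lambda>s. b / s\<^sup>2 * f (b / s)) absolutely_integrable_on ?S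
      \<longleftrightarrow> (\<lambda>s. b / s\<^sup>2 * f (b / s)) absolutely_integrable_on {0<..<b/u}"
    by (rule absolutely_integrable_spike_set_eq; rule negligible_subset[of "{b/u}"]) auto
  with ai_open have ai: "(\<lambda>s. b / s\<^sup>2 * f (b / s)) absolutely_integrable_on ?S" by simp
  have to_Icc: "integral ?S (\<lambda>s. b / s\<^sup>2 * f (b / s)) = integral {0..b/u} (\<lambda>s. b / s\<^sup>2 * f (b / s))"
    by (rule integral_spike_set; rule negligible_subset[of "{0}"]) auto
  have der: "((\<lambda>s. b / s) has_field_derivative (- (b / s\<^sup>2))) (at s within ?S)" if "s \<in> ?S" for s
    using that by (auto intro!: derivative_eq_intros simp: power2_eq_square field_simps)
  have inj: "inj_on (\<lambda>s. b / s) ?S" using b by (auto simp: inj_on_def field_simps)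
  have img: "(\<lambda>s. b / s) ` ?S = {u..}"
    using b u by (rule divide_image_Ioc)
  have eq: "\<bar>- (b / s\<^sup>2)\<bar> * f (b / s) = b / s\<^sup>2 * f (b / s)" for s
    using b by simp
  have "(\<lambda>s. \<bar>- (b / s\<^sup>2)\<bar> * f (b / s)) absolutely_integrable_on ?S \<and>
        integral ?S (\<lambda>s. \<bar>- (b / s\<^sup>2)\<bar> * f (b / s)) = integral ?S (\<lambda>s. b / s\<^sup>2 * f (b / s))"
    unfolding eq using ai by simp
  then have "f absolutely_integrable_on (\<lambda>s. b / s) ` ?S \<and>
        integral ((\<lambda>s. b / s) ` ?S) f = integral ?S (\<lambda>s. b / s\<^sup>2 * f (b / s))"
    using has_absolute_integral_change_of_variables_1'[of ?S "\<lambda>s. b / s" "\<lambda>s. - (b / s\<^sup>2)" f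
       "integral ?S (\<lambda>s. b / s\<^sup>2 * f (b / s))"] der inj by auto
  then show ?thesis unfolding img to_Icc by simp
qed

definition legendre_kernel :: "real \<Rightarrow> real \<Rightarrow> real" where
  "legendre_kernel m s = 1 / sqrt (s * (1 - s) * (1 - m * s))"

(* After s = sin^2 t, elliptic_F a m is twice Legendre's incomplete integral F(arcsin (sqrt a) | m);
   in particular elliptic_F 1 m = 2 K(m). *)
definition elliptic_F :: "real \<Rightarrow> real \<Rightarrow> real" where
  "elliptic_F a m = integral {0..a} (legendre_kernel m)"

lemma one_minus_mult_pos:
  fixes m s :: real
  assumes "0 \<le> m" "m < 1" "0 \<le> s" "s \<le> 1"
  shows "0 < 1 - m * s"
proof -
  have "m * s \<le> m" using assms by (simp add: mult_left_le)
  then show ?thesis using assms by linarith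
qed

lemma legendre_kernel_pos:
  assumes "0 \<le> m" "m < 1" "0 < s" "s < 1"
  shows "0 < legendre_kernel m s"
  using assms one_minus_mult_pos[of m s] by (simp add: legendre_kernel_def)

lemma legendre_kernel_ge_1:
  assumes "0 \<le> m" "m < 1" "0 < s" "s < 1"
  shows "1 \<le> legendre_kernel m s"
proof -
  have "s * (1 - s) * (1 - m * s) \<le> 1 * 1 * 1"
    using assms one_minus_mult_pos[of m s] by (intro mult_mono) auto
  moreover have "0 < s * (1 - s) * (1 - m * s)" using assms one_minus_mult_pos[of m s] by simp
  ultimately show ?thesis by (simp add: legendre_kernel_def)
qed

lemma legendre_kernel_mono:
  assumes "0 \<le> m1" "m1 \<le> m2" "m2 < 1" "0 < s" "s < 1"
  shows "legendre_kernel m1 s \<le> legendre_kernel m2 s"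
proof -
  have "m1 * s \<le> m2 * s" using assms by (simp add: mult_right_mono)
  then have "s * (1 - s) * (1 - m2 * s) \<le> s * (1 - s) * (1 - m1 * s)"
    using assms by (intro mult_left_mono) auto
  moreover have "0 < s * (1 - s) * (1 - m2 * s)" using assms one_minus_mult_pos[of m2 s] by simp
  ultimately show ?thesis unfolding legendre_kernel_def
    by (intro divide_left_mono mult_pos_pos) auto
qed

lemma legendre_kernel_le_kernel_0:
  assumes "0 \<le> m" "m < 1" "0 < s" "s < 1"
  shows "legendre_kernel m s \<le> legendre_kernel 0 s / sqrt (1 - m)"
proof -
  have "s * (1 - s) * (1 - m) \<le> s * (1 - s) * (1 - m * s)"
    using assms by (intro mult_left_mono) (auto simp: mult_left_le)
  moreover have "0 < s * (1 - s) * (1 - m)" using assms by simp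
  ultimately have "1 / sqrt (s * (1 - s) * (1 - m * s)) \<le> 1 / sqrt (s * (1 - s) * (1 - m))"
    by (intro divide_left_mono mult_pos_pos) auto
  then show ?thesis by (simp add: legendre_kernel_def real_sqrt_mult)
qed

lemma legendre_kernel_le_near_0:
  assumes "0 \<le> m" "m < 1" "0 < s" "s \<le> b" "b < 1"
  shows "legendre_kernel m s \<le> 1 / (sqrt s * (1 - b))"
proof -
  have "m * s \<le> b" using assms by (smt (verit) mult_left_le_one_le)
  then have "s * (1 - b) * (1 - b) \<le> s * (1 - s) * (1 - m * s)"
    using assms by (intro mult_mono) auto
  then have "sqrt (s * (1 - b) * (1 - b)) \<le> sqrt (s * (1 - s) * (1 - m * s))"
    by (rule real_sqrt_le_mono)
  moreover have "sqrt (s * (1 - b) * (1 - b)) = sqrt s * (1 - b)"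
    using assms by (simp add: real_sqrt_mult mult.assoc)
  moreover have "0 < sqrt s * (1 - b)" using assms by simp
  ultimately show ?thesis
    unfolding legendre_kernel_def using assms one_minus_mult_pos[of m s]
    by (intro divide_left_mono mult_pos_pos) auto
qed

lemma legendre_kernel_le_near_1:
  assumes "0 \<le> m" "m \<le> m0" "m0 < 1" "1/2 \<le> s" "s < 1"
  shows "legendre_kernel m s \<le> sqrt 2 / sqrt (1 - m0) * (1 / sqrt (1 - s))"
proof -
  have "m * s \<le> m0" using assms by (smt (verit) mult_left_le)
  then have "1/2 * (1 - s) * (1 - m0) \<le> s * (1 - s) * (1 - m * s)"
    using assms by (intro mult_mono) auto
  moreover have "0 < 1/2 * (1 - s) * (1 - m0)" using assms by simp
  ultimately have "legendre_kernel m s \<le> 1 / sqrt (1/2 * (1 - s) * (1 - m0))"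
    unfolding legendre_kernel_def by (intro divide_left_mono mult_pos_pos) auto
  also have "\<dots> = sqrt 2 / sqrt (1 - m0) * (1 / sqrt (1 - s))"
    by (simp add: real_sqrt_mult real_sqrt_divide)
  finally show ?thesis .
qed

lemma legendre_kernel_ge_inverse:
  assumes "0 \<le> m" "m < 1" "0 < s" "s < 1"
  shows "1 / (1 - m * s) \<le> legendre_kernel m s"
proof -
  have p: "0 < 1 - m * s" using one_minus_mult_pos[of m s] assms by simp
  have "s * (1 - s) * (1 - m * s) \<le> 1 * (1 - m * s) * (1 - m * s)"
    using assms p by (intro mult_mono) (auto simp: mult_left_le_one_le)
  then have "sqrt (s * (1 - s) * (1 - m * s)) \<le> 1 - m * s"
    using p real_sqrt_le_mono[of _ "(1 - m * s)\<^sup>2"] by (simp add: power2_eq_square)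
  moreover have "0 < s * (1 - s) * (1 - m * s)" using assms p by simp
  ultimately show ?thesis
    unfolding legendre_kernel_def using p by (intro divide_left_mono) auto
qed

lemma legendre_kernel_factor:
  assumes "0 \<le> m1" "m1 < 1" "0 \<le> m2" "m2 < 1" "0 < s" "s < 1"
  shows "legendre_kernel m2 s = sqrt ((1 - m1 * s) / (1 - m2 * s)) * legendre_kernel m1 s"
proof -
  have "0 < sqrt (1 - m1 * s)" "0 < sqrt (1 - m2 * s)" "0 < sqrt (s * (1 - s))"
    using assms one_minus_mult_pos[of m1 s] one_minus_mult_pos[of m2 s] by auto
  moreover have "legendre_kernel m2 s = 1 / (sqrt (s * (1 - s)) * sqrt (1 - m2 * s))"
    by (simp add: legendre_kernel_def real_sqrt_mult)
  moreover have "sqrt ((1 - m1 * s) / (1 - m2 * s)) * legendre_kernel m1 s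
      = sqrt (1 - m1 * s) / sqrt (1 - m2 * s) * (1 / (sqrt (s * (1 - s)) * sqrt (1 - m1 * s)))"
    by (simp add: legendre_kernel_def real_sqrt_mult real_sqrt_divide)
  ultimately show ?thesis by (simp add: field_simps)
qed

lemma legendre_kernel_factor_strict_mono:
  assumes "0 \<le> m1" "m1 < m2" "m2 < 1"
  shows "strict_mono_on {0<..<1} (\<lambda>s. sqrt ((1 - m1 * s) / (1 - m2 * s)))"
proof (rule strict_mono_onI)
  fix s t :: real assume "s \<in> {0<..<1}" "t \<in> {0<..<1}" "s < t"
  then have pos: "0 < 1 - m2 * s" "0 < 1 - m2 * t"
    using assms one_minus_mult_pos[of m2 s] one_minus_mult_pos[of m2 t] by auto
  have "(m2 - m1) * (s - t) < 0" using assms \<open>s < t\<close> by (simp add: mult_pos_neg)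
  then have "(1 - m1 * s) * (1 - m2 * t) < (1 - m1 * t) * (1 - m2 * s)"
    by (simp add: algebra_simps)
  then show "sqrt ((1 - m1 * s) / (1 - m2 * s)) < sqrt ((1 - m1 * t) / (1 - m2 * t))"
    using pos by (simp add: divide_simps)
qed

lemma legendre_kernel_0_has_integral:
  assumes "0 \<le> a" "a \<le> 1"
  shows "(legendre_kernel 0 has_integral 2 * arcsin (sqrt a)) {0..a}"
proof -
  have "(legendre_kernel 0 has_integral (2 * arcsin (sqrt a) - 2 * arcsin (sqrt 0))) {0..a}"
  proof (rule fundamental_theorem_of_calculus_interior)
    show "continuous_on {0..a} (\<lambda>s. 2 * arcsin (sqrt s))"
      using assms by (intro continuous_intros) (auto intro: order_trans[OF _ real_sqrt_ge_zero])
    fix s assume "s \<in> {0<..<a}"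
    then have s: "0 < s" "s < 1" using assms by auto
    have "((\<lambda>s. 2 * arcsin (sqrt s)) has_real_derivative
            2 * (inverse (sqrt (1 - (sqrt s)\<^sup>2)) * (inverse (sqrt s) / 2))) (at s)"
      using s by (intro DERIV_cmult DERIV_chain2[of arcsin _ sqrt] DERIV_arcsin DERIV_real_sqrt)
        (auto intro: order_less_le_trans[OF _ real_sqrt_ge_zero])
    moreover have "2 * (inverse (sqrt (1 - (sqrt s)\<^sup>2)) * (inverse (sqrt s) / 2)) = legendre_kernel 0 s"
      using s by (simp add: legendre_kernel_def real_sqrt_mult[symmetric] field_simps)
    ultimately show "((\<lambda>s. 2 * arcsin (sqrt s)) has_vector_derivative legendre_kernel 0 s) (at s)"
      by (simp add: has_real_derivative_iff_has_vector_derivative)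
  qed (use assms in auto)
  then show ?thesis by simp
qed

lemma legendre_kernel_absolutely_integrable:
  assumes "0 \<le> m" "m < 1" "0 \<le> a" "a \<le> 1"
  shows "legendre_kernel m absolutely_integrable_on {0<..<a}"
proof (rule measurable_bounded_by_integrable_imp_absolutely_integrable)
  have "0 < s * (1 - s) * (1 - m * s)" if "s \<in> {0<..<a}" for s
    using that assms one_minus_mult_pos[of m s] by simp
  then have "continuous_on {0<..<a} (legendre_kernel m)"
    unfolding legendre_kernel_def by (intro continuous_intros) force
  then show "legendre_kernel m \<in> borel_measurable (lebesgue_on {0<..<a})"
    by (rule continuous_imp_measurable_on_sets_lebesgue) auto
  have "legendre_kernel 0 integrable_on {0<..<a}"
    using legendre_kernel_0_has_integral[OF assms(3,4)] has_integral_Icc_iff_Ioo by blast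
  then show "(\<lambda>s. legendre_kernel 0 s / sqrt (1 - m)) integrable_on {0<..<a}"
    by (rule integrable_on_divide)
  fix s assume "s \<in> {0<..<a}"
  then show "norm (legendre_kernel m s) \<le> legendre_kernel 0 s / sqrt (1 - m)"
    using assms legendre_kernel_le_kernel_0[of m s] legendre_kernel_pos[of m s] by auto
qed simp

lemma legendre_kernel_integrable:
  assumes "0 \<le> m" "m < 1" "0 \<le> a" "a \<le> b" "b \<le> 1"
  shows "legendre_kernel m integrable_on {a..b}"
proof (rule integrable_subinterval_real)
  show "legendre_kernel m integrable_on {0..1}"
    using legendre_kernel_absolutely_integrable[of m 1] assms
    by (simp add: integrable_on_Icc_iff_Ioo absolutely_integrable_on_def)
qed (use assms in auto)

lemma elliptic_F_0:
  assumes "0 \<le> a" "a \<le> 1"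
  shows "elliptic_F a 0 = 2 * arcsin (sqrt a)"
  using legendre_kernel_0_has_integral[OF assms] by (simp add: elliptic_F_def integral_unique)

lemma integral_legendre_kernel_ge:
  assumes "0 \<le> m" "m < 1" "0 \<le> a" "a \<le> b" "b \<le> 1"
  shows "b - a \<le> integral {a..b} (legendre_kernel m)"
  using integral_ge_const_open_interval[of a b "legendre_kernel m" 1]
    assms legendre_kernel_integrable legendre_kernel_ge_1 by simp

lemma elliptic_F_ge:
  assumes "0 \<le> m" "m < 1" "0 \<le> a" "a \<le> 1"
  shows "a \<le> elliptic_F a m"
  using integral_legendre_kernel_ge[of m 0 a] assms by (simp add: elliptic_F_def)

lemma elliptic_F_add:
  assumes "0 \<le> m" "m < 1" "0 \<le> a" "a \<le> b" "b \<le> 1"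
  shows "elliptic_F b m = elliptic_F a m + integral {a..b} (legendre_kernel m)"
  unfolding elliptic_F_def
  using Henstock_Kurzweil_Integration.integral_combine[of 0 a b "legendre_kernel m"]
    assms legendre_kernel_integrable[of m 0 b] by simp

lemma elliptic_F_mono_left:
  assumes "0 \<le> m" "m < 1" "0 \<le> a" "a \<le> b" "b \<le> 1"
  shows "elliptic_F a m \<le> elliptic_F b m"
  using elliptic_F_add[OF assms] integral_legendre_kernel_ge[OF assms] assms by simp

lemma elliptic_F_mono_right:
  assumes "0 \<le> m1" "m1 \<le> m2" "m2 < 1" "0 \<le> a" "a \<le> 1"
  shows "elliptic_F a m1 \<le> elliptic_F a m2"
  unfolding elliptic_F_def
  by (rule integral_le_open_interval)
     (use assms legendre_kernel_integrable legendre_kernel_mono in auto)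

lemma elliptic_F_le_elliptic_F_0:
  assumes "0 \<le> m" "m < 1" "0 \<le> a" "a \<le> 1"
  shows "elliptic_F a m \<le> elliptic_F a 0 / sqrt (1 - m)"
proof -
  have "integral {0..a} (legendre_kernel m) \<le> integral {0..a} (\<lambda>s. legendre_kernel 0 s / sqrt (1 - m))"
    by (rule integral_le_open_interval)
       (use assms legendre_kernel_integrable legendre_kernel_le_kernel_0 integrable_on_divide in auto)
  then show ?thesis by (simp add: elliptic_F_def)
qed

lemma elliptic_F_le_sqrt:
  assumes "0 \<le> m" "m < 1" "0 \<le> a" "a \<le> b" "b < 1"
  shows "elliptic_F a m \<le> 2 * sqrt a / (1 - b)"
proof -
  have hi: "((\<lambda>s. 1 / (sqrt s * (1 - b))) has_integral (2 * sqrt a / (1 - b) - 2 * sqrt 0 / (1 - b))) {0..a}"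
  proof (rule fundamental_theorem_of_calculus_interior)
    fix s assume s: "s \<in> {0<..<a}"
    have "((\<lambda>s. 2 * sqrt s / (1 - b)) has_real_derivative (2 * (inverse (sqrt s) / 2) / (1 - b))) (at s)"
      using s by (intro DERIV_cdivide DERIV_cmult DERIV_real_sqrt) auto
    then show "((\<lambda>s. 2 * sqrt s / (1 - b)) has_vector_derivative 1 / (sqrt s * (1 - b))) (at s)"
      by (simp add: has_real_derivative_iff_has_vector_derivative field_simps)
  qed (use assms in \<open>auto intro!: continuous_intros\<close>)
  have "integral {0..a} (legendre_kernel m) \<le> integral {0..a} (\<lambda>s. 1 / (sqrt s * (1 - b)))"
  proof (rule integral_le_open_interval)
    fix s assume "s \<in> {0<..<a}"
    then show "legendre_kernel m s \<le> 1 / (sqrt s * (1 - b))"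
      using legendre_kernel_le_near_0[of m s b] assms by simp
  qed (use assms legendre_kernel_integrable hi in auto)
  then show ?thesis using integral_unique[OF hi] by (simp add: elliptic_F_def)
qed

lemma elliptic_F_1_ge_ln:
  assumes "0 < m" "m < 1"
  shows "- ln (1 - m) \<le> elliptic_F 1 m"
proof -
  have pos: "0 < 1 - m * s" if "0 \<le> s" "s \<le> 1" for s
    using one_minus_mult_pos[of m s] assms that by simp
  have hi: "((\<lambda>s. 1 / (1 - m * s)) has_integral (- ln (1 - m * 1) / m - (- ln (1 - m * 0) / m))) {0..1}"
  proof (rule fundamental_theorem_of_calculus_interior)
    show "continuous_on {0..1} (\<lambda>s. - ln (1 - m * s) / m)"
      using pos assms by (intro continuous_intros) force+
    fix s assume s: "s \<in> {0<..<(1::real)}"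
    have "((\<lambda>s. - ln (1 - m * s) / m) has_real_derivative 1 / (1 - m * s)) (at s)"
      using pos[of s] s assms by (auto intro!: derivative_eq_intros simp: field_simps)
    then show "((\<lambda>s. - ln (1 - m * s) / m) has_vector_derivative 1 / (1 - m * s)) (at s)"
      by (simp add: has_real_derivative_iff_has_vector_derivative)
  qed simp
  have "integral {0..1} (\<lambda>s. 1 / (1 - m * s)) \<le> integral {0..1} (legendre_kernel m)"
  proof (rule integral_le_open_interval)
    fix s assume "s \<in> {0<..<(1::real)}"
    then show "1 / (1 - m * s) \<le> legendre_kernel m s"
      using legendre_kernel_ge_inverse[of m s] assms by simp
  qed (use assms legendre_kernel_integrable hi in auto)
  moreover have "- ln (1 - m) \<le> - ln (1 - m) / m"
  proof -
    have "0 < - ln (1 - m)" using assms by simp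
    then have "- ln (1 - m) * m \<le> - ln (1 - m)"
      using mult_left_le[of m "- ln (1 - m)"] assms by linarith
    then show ?thesis by (subst pos_le_divide_eq[OF assms(1)])
  qed
  ultimately show ?thesis using integral_unique[OF hi] by (simp add: elliptic_F_def)
qed

lemma integral_legendre_kernel_tail_le:
  assumes "0 \<le> m" "m \<le> m0" "m0 < 1" "1/2 \<le> a" "a \<le> 1"
  shows "integral {a..1} (legendre_kernel m) \<le> 2 * sqrt 2 * sqrt (1 - a) / sqrt (1 - m0)"
proof -
  have hi: "((\<lambda>s. 1 / sqrt (1 - s)) has_integral (- 2 * sqrt (1 - 1) - (- 2 * sqrt (1 - a)))) {a..1}"
  proof (rule fundamental_theorem_of_calculus_interior)
    fix s assume s: "s \<in> {a<..<1}"
    have "((\<lambda>s. - 2 * sqrt (1 - s)) has_real_derivative (- 2 * (inverse (sqrt (1 - s)) / 2 * (0 - 1)))) (at s)"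
      using s by (intro DERIV_cmult DERIV_chain2[of sqrt _ "\<lambda>s. 1 - s", OF DERIV_real_sqrt]
          derivative_intros) auto
    then show "((\<lambda>s. - 2 * sqrt (1 - s)) has_vector_derivative 1 / sqrt (1 - s)) (at s)"
      by (simp add: has_real_derivative_iff_has_vector_derivative field_simps)
  qed (use assms in \<open>auto intro!: continuous_intros\<close>)
  have "integral {a..1} (legendre_kernel m) \<le> integral {a..1} (\<lambda>s. sqrt 2 / sqrt (1 - m0) * (1 / sqrt (1 - s)))"
  proof (rule integral_le_open_interval)
    fix s assume "s \<in> {a<..<1}"
    then show "legendre_kernel m s \<le> sqrt 2 / sqrt (1 - m0) * (1 / sqrt (1 - s))"
      using legendre_kernel_le_near_1[of m m0 s] assms by simp
  next
    show "(\<lambda>s. sqrt 2 / sqrt (1 - m0) * (1 / sqrt (1 - s))) integrable_on {a..1}"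
      using hi by (intro integrable_on_mult_right) blast
  qed (use assms legendre_kernel_integrable in auto)
  also have "\<dots> = sqrt 2 / sqrt (1 - m0) * (2 * sqrt (1 - a))"
    unfolding integral_mult_right integral_unique[OF hi] by simp
  finally show ?thesis by (simp add: algebra_simps)
qed

lemma elliptic_F_1_pos:
  assumes "0 \<le> m" "m < 1"
  shows "0 < elliptic_F 1 m"
  using elliptic_F_ge[of m 1] assms by simp

lemma elliptic_F_nonneg:
  assumes "0 \<le> m" "m < 1" "0 \<le> a" "a \<le> 1"
  shows "0 \<le> elliptic_F a m"
  using elliptic_F_ge[of m a] assms by simp

lemma elliptic_F_ratio_strict_antimono:
  assumes "0 \<le> m1" "m1 < m2" "m2 < 1" "0 < a" "a < 1"
  shows "elliptic_F a m2 / elliptic_F 1 m2 < elliptic_F a m1 / elliptic_F 1 m1"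
  unfolding elliptic_F_def
proof (rule integral_fraction_less_of_strict_mono_factor
    [where \<epsilon> = 1 and h = "\<lambda>s. sqrt ((1 - m1 * s) / (1 - m2 * s))"])
  fix s :: real assume s: "s \<in> {0<..<1}"
  then show "0 < sqrt ((1 - m1 * s) / (1 - m2 * s))"
    using assms one_minus_mult_pos[of m1 s] one_minus_mult_pos[of m2 s] by simp
  show "legendre_kernel m2 s = sqrt ((1 - m1 * s) / (1 - m2 * s)) * legendre_kernel m1 s"
    using legendre_kernel_factor[of m1 m2 s] assms s by simp
  show "1 \<le> legendre_kernel m1 s" using legendre_kernel_ge_1[of m1 s] assms s by simp
next
  show "strict_mono_on {0<..<1} (\<lambda>s. sqrt ((1 - m1 * s) / (1 - m2 * s)))"
    using legendre_kernel_factor_strict_mono assms by simp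
qed (use assms legendre_kernel_integrable in auto)

lemma elliptic_F_ratio_le_1:
  assumes "0 \<le> m" "m < 1" "0 \<le> a" "a \<le> 1"
  shows "elliptic_F a m / elliptic_F 1 m \<le> 1"
  using elliptic_F_mono_left[of m a 1] elliptic_F_1_pos[of m] assms by simp

lemma elliptic_F_ratio_le_ln:
  assumes "0 < m" "m < 1" "0 \<le> a" "a \<le> b" "b < 1"
  shows "elliptic_F a m / elliptic_F 1 m \<le> 2 / (1 - b) / - ln (1 - m)"
proof (rule frac_le)
  have "2 * sqrt a / (1 - b) \<le> 2 / (1 - b)"
    using assms by (intro divide_right_mono) auto
  then show "elliptic_F a m \<le> 2 / (1 - b)"
    using elliptic_F_le_sqrt[of m a b] assms by simp
qed (use assms elliptic_F_1_ge_ln in auto)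

lemma elliptic_F_ratio_tendsto_at_left_1:
  assumes "0 \<le> a" "a < 1"
  shows "((\<lambda>m. elliptic_F a m / elliptic_F 1 m) \<longlongrightarrow> 0) (at_left 1)"
proof (rule tendsto_sandwich[OF _ _ tendsto_const])
  have ev: "eventually (\<lambda>m. m \<in> {0<..<1}) (at_left (1::real))"
    by (rule eventually_at_left_real) simp
  then show "eventually (\<lambda>m. 0 \<le> elliptic_F a m / elliptic_F 1 m) (at_left 1)"
    by eventually_elim (use assms elliptic_F_nonneg elliptic_F_1_pos in auto)
  show "eventually (\<lambda>m. elliptic_F a m / elliptic_F 1 m \<le> 2 / (1 - a) / - ln (1 - m)) (at_left 1)"
    using ev by eventually_elim (use assms elliptic_F_ratio_le_ln in auto)
  show "((\<lambda>m::real. 2 / (1 - a) / - ln (1 - m)) \<longlongrightarrow> 0) (at_left 1)"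
    by real_asymp
qed

lemma elliptic_F_ratio_bounds_near_0:
  assumes "0 \<le> m" "m < 1" "0 \<le> a" "a \<le> 1"
  shows "elliptic_F a 0 / elliptic_F 1 0 * sqrt (1 - m) \<le> elliptic_F a m / elliptic_F 1 m"
    and "elliptic_F a m / elliptic_F 1 m \<le> elliptic_F a 0 / elliptic_F 1 0 / sqrt (1 - m)"
proof -
  have s: "0 < sqrt (1 - m)" using assms by simp
  have "elliptic_F a 0 / (elliptic_F 1 0 / sqrt (1 - m)) \<le> elliptic_F a m / elliptic_F 1 m"
    using elliptic_F_mono_right[of 0 m a] elliptic_F_le_elliptic_F_0[of m 1]
      elliptic_F_1_pos[of m] elliptic_F_nonneg[of m a] assms
    by (intro frac_le) auto
  then show "elliptic_F a 0 / elliptic_F 1 0 * sqrt (1 - m) \<le> elliptic_F a m / elliptic_F 1 m"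
    by (simp add: field_simps)
  have "elliptic_F a m / elliptic_F 1 m \<le> (elliptic_F a 0 / sqrt (1 - m)) / elliptic_F 1 0"
    using elliptic_F_mono_right[of 0 m 1] elliptic_F_le_elliptic_F_0[of m a]
      elliptic_F_1_pos[of 0] elliptic_F_nonneg[of m a] assms s
    by (intro frac_le) auto
  then show "elliptic_F a m / elliptic_F 1 m \<le> elliptic_F a 0 / elliptic_F 1 0 / sqrt (1 - m)"
    by (metis divide_divide_eq_left mult.commute)
qed

lemma elliptic_F_ratio_tendsto_at_right_0:
  assumes "0 \<le> a" "a \<le> 1"
  shows "((\<lambda>m. elliptic_F a m / elliptic_F 1 m) \<longlongrightarrow> 2 * arcsin (sqrt a) / pi) (at_right 0)"
proof -
  define L where "L = elliptic_F a 0 / elliptic_F 1 0"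
  have L: "L = 2 * arcsin (sqrt a) / pi"
    using elliptic_F_0[of a] elliptic_F_0[of 1] assms by (simp add: L_def)
  have ev: "eventually (\<lambda>m. m \<in> {0<..<1}) (at_right (0::real))"
    by (rule eventually_at_right_real) simp
  have "((\<lambda>m. elliptic_F a m / elliptic_F 1 m) \<longlongrightarrow> L) (at_right 0)"
  proof (rule tendsto_sandwich)
    show "eventually (\<lambda>m. L * sqrt (1 - m) \<le> elliptic_F a m / elliptic_F 1 m) (at_right 0)"
      using ev
    proof eventually_elim
      case (elim m)
      then show ?case unfolding L_def using elliptic_F_ratio_bounds_near_0(1)[of m a] assms by simp
    qed
    show "eventually (\<lambda>m. elliptic_F a m / elliptic_F 1 m \<le> L / sqrt (1 - m)) (at_right 0)"
      using ev
    proof eventually_elim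
      case (elim m)
      then show ?case unfolding L_def using elliptic_F_ratio_bounds_near_0(2)[of m a] assms by simp
    qed
    have "((\<lambda>m. L * sqrt (1 - m)) \<longlongrightarrow> L * sqrt (1 - 0)) (at_right 0)"
      by (intro tendsto_intros)
    then show "((\<lambda>m. L * sqrt (1 - m)) \<longlongrightarrow> L) (at_right 0)" by simp
    have "((\<lambda>m. L / sqrt (1 - m)) \<longlongrightarrow> L / sqrt (1 - 0)) (at_right 0)"
      by (intro tendsto_intros) auto
    then show "((\<lambda>m. L / sqrt (1 - m)) \<longlongrightarrow> L) (at_right 0)" by simp
  qed
  then show ?thesis unfolding L .
qed

lemma elliptic_F_ratio_ge_tail:
  assumes "0 \<le> m" "m \<le> m0" "m0 < 1" "1/2 \<le> a" "a \<le> 1"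
  shows "1 - 2 * sqrt 2 * sqrt (1 - a) / sqrt (1 - m0) \<le> elliptic_F a m / elliptic_F 1 m"
proof -
  define T where "T = integral {a..1} (legendre_kernel m)"
  have F1: "1 \<le> elliptic_F 1 m" using elliptic_F_ge[of m 1] assms by simp
  have "elliptic_F a m / elliptic_F 1 m = 1 - T / elliptic_F 1 m"
    using elliptic_F_add[of m a 1] F1 assms by (simp add: T_def field_simps)
  moreover have "T / elliptic_F 1 m \<le> T"
    using F1 integral_legendre_kernel_ge[of m a 1] assms
    by (simp add: T_def divide_le_eq mult_le_cancel_left1)
  ultimately show ?thesis
    using integral_legendre_kernel_tail_le[OF assms] by (simp add: T_def)
qed

lemma ell_integrand_reciprocal:
  assumes "0 < s"
  shows "ell_integrand l (1 / s) / s\<^sup>2 = legendre_kernel l s"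
proof -
  have e: "(1/s) * (1/s - 1) * (1/s - l) = (s * (1 - s) * (1 - l * s)) / (s\<^sup>2)\<^sup>2"
    using assms by (simp add: field_simps power2_eq_square)
  show ?thesis
    unfolding ell_integrand_def legendre_kernel_def e real_sqrt_divide real_sqrt_abs using assms
    by simp
qed

lemma ell_integrand_rescaled:
  assumes "0 < s" "0 < l"
  shows "l * ell_integrand l (l / s) / s\<^sup>2 = ell_integrand l s"
proof -
  have e: "(l/s) * (l/s - 1) * (l/s - l) = l\<^sup>2 * (s * (s - 1) * (s - l)) / (s\<^sup>2)\<^sup>2"
    using assms by (simp add: field_simps power2_eq_square)
  show ?thesis
    unfolding ell_integrand_def e real_sqrt_divide real_sqrt_mult[of "l\<^sup>2"] real_sqrt_abs using assms
    by simp
qed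

lemma ell_integrand_eq_legendre_kernel:
  assumes "1 < l"
  shows "ell_integrand l s = sqrt (1 / l) * legendre_kernel (1 / l) s"
proof -
  have e: "s * (s - 1) * (s - l) = l * (s * (1 - s) * (1 - 1 / l * s))"
    using assms by (simp add: field_simps)
  show ?thesis
    unfolding ell_integrand_def legendre_kernel_def e real_sqrt_mult using assms
    by (simp add: real_sqrt_divide)
qed

lemma I_int_eq_elliptic_F:
  assumes "0 < l" "l < 1" "1 \<le> u"
  shows "I_int u l = elliptic_F (1 / u) l"
proof -
  have "legendre_kernel l absolutely_integrable_on {0<..<1/u}"
    using legendre_kernel_absolutely_integrable[of l "1/u"] assms by simp
  then have ai: "(\<lambda>s. 1 / s\<^sup>2 * ell_integrand l (1 / s)) absolutely_integrable_on {0<..<1/u}"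
    by (rule absolutely_integrable_spike[OF _ negligible_empty]) (auto simp: ell_integrand_reciprocal)
  have "I_int u l = integral {0..1/u} (\<lambda>s. 1 / s\<^sup>2 * ell_integrand l (1 / s))"
    unfolding I_int_def using assms by (intro integral_Ici_reciprocal_subst ai) auto
  also have "\<dots> = elliptic_F (1 / u) l"
    unfolding elliptic_F_def
    by (rule integral_spike[OF negligible_sing[of 0]]) (auto simp: ell_integrand_reciprocal)
  finally show ?thesis .
qed

lemma I_int_eq_elliptic_F_reciprocal:
  assumes "1 < l" "l \<le> u"
  shows "I_int u l = sqrt (1 / l) * elliptic_F (l / u) (1 / l)"
proof -
  have kernel: "l * ell_integrand l (l / s) / s\<^sup>2 = sqrt (1 / l) * legendre_kernel (1 / l) s" if "0 < s" for s
    using that assms ell_integrand_rescaled[of s l] ell_integrand_eq_legendre_kernel[of l s] by simp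
  have "(\<lambda>s. sqrt (1 / l) * legendre_kernel (1 / l) s) absolutely_integrable_on {0<..<l/u}"
    using legendre_kernel_absolutely_integrable[of "1/l" "l/u"] assms
      absolutely_integrable_on_scaleR_iff[where c = "sqrt (1 / l)" and f = "legendre_kernel (1 / l)"]
    by simp
  then have ai: "(\<lambda>s. l / s\<^sup>2 * ell_integrand l (l / s)) absolutely_integrable_on {0<..<l/u}"
    by (rule absolutely_integrable_spike[OF _ negligible_empty]) (auto simp: kernel)
  have "I_int u l = integral {0..l/u} (\<lambda>s. l / s\<^sup>2 * ell_integrand l (l / s))"
    unfolding I_int_def using assms by (intro integral_Ici_reciprocal_subst ai) auto
  also have "\<dots> = integral {0..l/u} (\<lambda>s. sqrt (1 / l) * legendre_kernel (1 / l) s)"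
    by (rule integral_spike[OF negligible_sing[of 0]]) (auto simp: kernel)
  also have "\<dots> = sqrt (1 / l) * elliptic_F (l / u) (1 / l)"
    by (simp add: elliptic_F_def)
  finally show ?thesis .
qed

lemma omega2_eq_elliptic_F:
  assumes "1 < l"
  shows "omega2 l = sqrt (1 / l) * elliptic_F 1 (1 / l)"
  unfolding omega2_def elliptic_F_def ell_integrand_eq_legendre_kernel[OF assms] by simp

lemma I_int_ratio_eq:
  assumes "0 < l" "l < 1" "1 \<le> u"
  shows "I_int u l / I_int 1 l = elliptic_F (1 / u) l / elliptic_F 1 l"
  using I_int_eq_elliptic_F[of l u] I_int_eq_elliptic_F[of l 1] assms by simp

lemma I_int_omega2_ratio_eq:
  assumes "1 < l" "l \<le> u"
  shows "I_int u l / omega2 l = elliptic_F (l / u) (1 / l) / elliptic_F 1 (1 / l)"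
  using I_int_eq_elliptic_F_reciprocal[OF assms] omega2_eq_elliptic_F[OF assms(1)] assms by simp

lemma I_int_ratio_strict_antimono:
  assumes "1 < u"
  shows "strict_antimono_on {0<..<1} (\<lambda>l. I_int u l / I_int 1 l)"
proof (rule monotone_onI)
  fix x y :: real assume "x \<in> {0<..<1}" "y \<in> {0<..<1}" "x < y"
  then show "I_int u y / I_int 1 y < I_int u x / I_int 1 x"
    using I_int_ratio_eq elliptic_F_ratio_strict_antimono[of x y "1/u"] assms by simp
qed

lemma I_int_ratio_tendsto_at_left_1:
  assumes "1 < u"
  shows "((\<lambda>l. I_int u l / I_int 1 l) \<longlongrightarrow> 0) (at_left 1)"
proof (rule Lim_transform_eventually)
  show "((\<lambda>l. elliptic_F (1 / u) l / elliptic_F 1 l) \<longlongrightarrow> 0) (at_left 1)"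
    using assms by (intro elliptic_F_ratio_tendsto_at_left_1) auto
  show "eventually (\<lambda>l. elliptic_F (1 / u) l / elliptic_F 1 l = I_int u l / I_int 1 l) (at_left 1)"
    using eventually_at_left_real[of 0 "1::real", simplified]
    by eventually_elim (use assms I_int_ratio_eq in auto)
qed

lemma I_int_ratio_tendsto_at_right_0:
  assumes "1 \<le> u"
  shows "((\<lambda>l. I_int u l / I_int 1 l) \<longlongrightarrow> 2 * arcsin (sqrt (1 / u)) / pi) (at_right 0)"
proof (rule Lim_transform_eventually)
  show "((\<lambda>l. elliptic_F (1 / u) l / elliptic_F 1 l) \<longlongrightarrow> 2 * arcsin (sqrt (1 / u)) / pi) (at_right 0)"
    using assms by (intro elliptic_F_ratio_tendsto_at_right_0) auto
  show "eventually (\<lambda>l. elliptic_F (1 / u) l / elliptic_F 1 l = I_int u l / I_int 1 l) (at_right 0)"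
    using eventually_at_right_real[of 0 "1::real", simplified]
    by eventually_elim (use assms I_int_ratio_eq in auto)
qed

lemma I_int_omega2_ratio_strict_mono:
  assumes "1 < u"
  shows "strict_mono_on {1<..<u} (\<lambda>l. I_int u l / omega2 l)"
proof (rule strict_mono_onI)
  fix x y :: real assume xy: "x \<in> {1<..<u}" "y \<in> {1<..<u}" "x < y"
  then have m: "0 \<le> 1 / y" "1 / y < 1 / x" "1 / x < 1" "0 < x / u" "x / u < 1" "x / u \<le> y / u" "y / u \<le> 1"
    by (auto simp: field_simps)
  have "elliptic_F (x / u) (1 / x) / elliptic_F 1 (1 / x) < elliptic_F (x / u) (1 / y) / elliptic_F 1 (1 / y)"
    by (rule elliptic_F_ratio_strict_antimono) (use m in auto)
  also have "\<dots> \<le> elliptic_F (y / u) (1 / y) / elliptic_F 1 (1 / y)"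
    using elliptic_F_mono_left[of "1/y" "x/u" "y/u"] elliptic_F_1_pos[of "1/y"] m
    by (intro divide_right_mono) auto
  finally show "I_int u x / omega2 x < I_int u y / omega2 y"
    using I_int_omega2_ratio_eq xy by simp
qed

lemma I_int_omega2_ratio_tendsto_at_right_1:
  assumes "1 < u"
  shows "((\<lambda>l. I_int u l / omega2 l) \<longlongrightarrow> 0) (at_right 1)"
proof -
  define b where "b = (1 + u) / (2 * u)"
  have b: "0 < b" "b < 1" using assms by (auto simp: b_def field_simps)
  have ev: "eventually (\<lambda>l. l \<in> {1<..<(1 + u) / 2}) (at_right 1)"
    by (rule eventually_at_right_real) (use assms in simp)
  have "((\<lambda>l. elliptic_F (l / u) (1 / l) / elliptic_F 1 (1 / l)) \<longlongrightarrow> 0) (at_right 1)"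
  proof (rule tendsto_sandwich[OF _ _ tendsto_const])
    show "eventually (\<lambda>l. 0 \<le> elliptic_F (l / u) (1 / l) / elliptic_F 1 (1 / l)) (at_right 1)"
      using ev by eventually_elim (use assms elliptic_F_nonneg elliptic_F_1_pos in \<open>auto simp: field_simps\<close>)
    show "eventually (\<lambda>l. elliptic_F (l / u) (1 / l) / elliptic_F 1 (1 / l)
        \<le> 2 / (1 - b) / - ln (1 - 1 / l)) (at_right 1)"
      using ev
    proof eventually_elim
      case (elim l)
      then have "0 < 1 / l" "1 / l < 1" "0 \<le> l / u" "l / u \<le> b"
        using assms by (auto simp: b_def field_simps)
      then show ?case using elliptic_F_ratio_le_ln[of "1 / l" "l / u" b] b by simp
    qed
    show "((\<lambda>l::real. 2 / (1 - b) / - ln (1 - 1 / l)) \<longlongrightarrow> 0) (at_right 1)"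
      by real_asymp
  qed
  then show ?thesis
    by (rule Lim_transform_eventually) (use ev I_int_omega2_ratio_eq in \<open>auto elim: eventually_mono\<close>)
qed

lemma I_int_omega2_ratio_tendsto_at_left:
  assumes "1 < u"
  shows "((\<lambda>l. I_int u l / omega2 l) \<longlongrightarrow> 1) (at_left u)"
proof -
  define l0 where "l0 = (1 + u) / 2"
  define D where "D = 2 * sqrt 2 / sqrt (1 - 1 / l0)"
  have l0: "1 < l0" "l0 < u" using assms by (auto simp: l0_def)
  have ev: "eventually (\<lambda>l. l \<in> {l0<..<u}) (at_left u)"
    by (rule eventually_at_left_real) (use l0 in simp)
  have bounds: "1 - D * sqrt (1 - l / u) \<le> elliptic_F (l / u) (1 / l) / elliptic_F 1 (1 / l)
      \<and> elliptic_F (l / u) (1 / l) / elliptic_F 1 (1 / l) \<le> 1" if "l \<in> {l0<..<u}" for l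
  proof -
    have "1 / l \<le> 1 / l0" "1 / l0 < 1" "1 / 2 \<le> l / u" "l / u \<le> 1"
      using that l0 by (auto simp: field_simps l0_def)
    then show ?thesis
      using elliptic_F_ratio_ge_tail[of "1/l" "1/l0" "l/u"] elliptic_F_ratio_le_1[of "1/l" "l/u"] that l0
      by (auto simp: D_def)
  qed
  have "((\<lambda>l. elliptic_F (l / u) (1 / l) / elliptic_F 1 (1 / l)) \<longlongrightarrow> 1) (at_left u)"
  proof (rule tendsto_sandwich[OF _ _ _ tendsto_const])
    show "eventually (\<lambda>l. 1 - D * sqrt (1 - l / u) \<le> elliptic_F (l / u) (1 / l) / elliptic_F 1 (1 / l)) (at_left u)"
      using ev by eventually_elim (use bounds in auto)
    show "eventually (\<lambda>l. elliptic_F (l / u) (1 / l) / elliptic_F 1 (1 / l) \<le> 1) (at_left u)"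
      using ev by eventually_elim (use bounds in auto)
    have "((\<lambda>l. 1 - D * sqrt (1 - l / u)) \<longlongrightarrow> 1 - D * sqrt (1 - u / u)) (at_left u)"
      by (intro tendsto_intros) (use assms in auto)
    then show "((\<lambda>l. 1 - D * sqrt (1 - l / u)) \<longlongrightarrow> 1) (at_left u)" using assms by simp
  qed
  then show ?thesis
    by (rule Lim_transform_eventually) (use ev l0 I_int_omega2_ratio_eq in \<open>auto elim: eventually_mono\<close>)
qed

lemma arcsin_eq_arctan_complement:
  assumes "0 < c" "c < 1"
  shows "2 * arcsin c / pi = 1 - (2 / pi) * arctan (sqrt (1 / c\<^sup>2 - 1))"
proof -
  define x where "x = c / sqrt (1 - c\<^sup>2)"
  have c2: "c\<^sup>2 < 1" using assms by (simp add: power_less_one_iff)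
  have "0 < x" using assms c2 by (simp add: x_def)
  have "1 / c\<^sup>2 - 1 = (1 - c\<^sup>2) / c\<^sup>2" using assms by (simp add: field_simps)
  then have "sqrt (1 / c\<^sup>2 - 1) = 1 / x" using assms by (simp add: x_def real_sqrt_divide)
  moreover have "arcsin c = arctan x" unfolding x_def using assms by (intro arcsin_arctan) auto
  moreover have "arctan (1 / x) = pi / 2 - arctan x"
    using arctan_inverse[of x] \<open>0 < x\<close> by (simp add: inverse_eq_divide)
  ultimately show ?thesis by (simp add: field_simps)
qed

theorem mainTheorem11:
  fixes c :: real
  assumes "0 < c" and "c < 1"
  shows "strict_antimono_on {0<..<1} (\<lambda>l. I_int (1 / c\<^sup>2) l / I_int 1 l)
       \<and> ((\<lambda>l. I_int (1 / c\<^sup>2) l / I_int 1 l) \<longlongrightarrow> 0) (at_left 1)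
       \<and> ((\<lambda>l. I_int (1 / c\<^sup>2) l / I_int 1 l) \<longlongrightarrow> 1 - (2 / pi) * arctan (sqrt (1 / c\<^sup>2 - 1))) (at_right 0)
       \<and> strict_mono_on {1<..<1 / c\<^sup>2} (\<lambda>l. I_int (1 / c\<^sup>2) l / omega2 l)
       \<and> ((\<lambda>l. I_int (1 / c\<^sup>2) l / omega2 l) \<longlongrightarrow> 0) (at_right 1)
       \<and> ((\<lambda>l. I_int (1 / c\<^sup>2) l / omega2 l) \<longlongrightarrow> 1) (at_left (1 / c\<^sup>2))"
proof -
  have u: "1 < 1 / c\<^sup>2" using assms by (simp add: power_less_one_iff)
  have "sqrt (1 / (1 / c\<^sup>2)) = c" using assms by simp
  then have "2 * arcsin (sqrt (1 / (1 / c\<^sup>2))) / pi = 1 - (2 / pi) * arctan (sqrt (1 / c\<^sup>2 - 1))"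
    using arcsin_eq_arctan_complement assms by simp
  then show ?thesis
    using I_int_ratio_strict_antimono[OF u] I_int_ratio_tendsto_at_left_1[OF u]
      I_int_ratio_tendsto_at_right_0[of "1 / c\<^sup>2"] I_int_omega2_ratio_strict_mono[OF u]
      I_int_omega2_ratio_tendsto_at_right_1[OF u] I_int_omega2_ratio_tendsto_at_left[OF u] u
    by simp
qed

end
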